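(* Let $g\ge1$ and $n\ge 3$. In $B_n(\Sigma_g)/\Gamma_3(B_n(\Sigma_g))$ all the classes of $\sigma_1,\dots,\sigma_{n-1}$ coincide; call this class $\sigma$, and denote the classes of $a_i,b_i$ again by $a_i,b_i$. Then $B_n(\Sigma_g)/\Gamma_3(B_n(\Sigma_g))$ is isomorphic to a semidirect product $(\mathbb{Z}\times\mathbb{Z}^g)\rtimes\mathbb{Z}^g$, where the first factor $\mathbb{Z}$ is central and generated by $\sigma$, the factor $\mathbb{Z}^g$ is (freely abelian) generated by $a_1,\dots,a_g$, and the acting factor $\mathbb{Z}^g$ is generated by $b_1,\dots,b_g$, the action being given by $b_j a_l b_j^{-1}=a_l$ for $l\neq j$ and $b_j a_j b_j^{-1}=\sigma^{-2}a_j$ (and $b_j\sigma b_j^{-1}=\sigma$). In particular it is a central extension of $\mathbb{Z}^{2g}$ by $\mathbb{Z}$, and every element can be written uniquely as $\sigma^p\prod_{i=1}^g a_i^{m_i}\prod_{i=1}^g b_i^{n_i}$ with $p,m_i,n_i\in\mathbb{Z}$.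
   Context: $\Sigma_g$ is a compact connected orientable surface of genus $g\ge1$ with one boundary component; $B_n(\Sigma_g)=\pi_1(F_n(\Sigma_g)/S_n)$ where $F_n(\Sigma_g)$ is the space of ordered $n$-tuples of distinct points. $\Gamma_1(G)=G$, $\Gamma_i(G)=[G,\Gamma_{i-1}(G)]$. $B_n(\Sigma_g)$ has the presentation with generators $\sigma_1,\dots,\sigma_{n-1},a_1,b_1,\dots,a_g,b_g$ and relations: $\sigma_i\sigma_j=\sigma_j\sigma_i$ for $|i-j|\ge2$; $\sigma_i\sigma_{i+1}\sigma_i=\sigma_{i+1}\sigma_i\sigma_{i+1}$ for $1\le i\le n-2$; $c\,\sigma_j=\sigma_j c$ for $c\in\{a_i,b_i\}$, $j\ge2$; $c\sigma_1c\sigma_1=\sigma_1c\sigma_1c$ for $c\in\{a_i,b_i\}$; $a_i\sigma_1b_i=\sigma_1b_i\sigma_1a_i\sigma_1$; $c_i(\sigma_1^{-1}c_j\sigma_1)=(\sigma_1^{-1}c_j\sigma_1)c_i$ for $c_i\in\{a_i,b_i\}$, $c_j\in\{a_j,b_j\}$, $1\le j<i\le g$. *)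

theory Defs
  imports "HOL-Algebra.Algebra"
begin

text \<open>Words over an alphabet: letters are pairs (x, e), e = False for x, e = True for x inverse.\<close>

type_synonym 'g word = "('g \<times> bool) list"

text \<open>The congruence on words generated by free cancellation and the relations R
  (pairs (u, v) meaning u = v).\<close>

inductive peq :: "('g word \<times> 'g word) set \<Rightarrow> 'g word \<Rightarrow> 'g word \<Rightarrow> bool"
  for R where
  peq_refl: "peq R w w"
| peq_sym: "peq R u w \<Longrightarrow> peq R w u"
| peq_trans: "peq R u v \<Longrightarrow> peq R v w \<Longrightarrow> peq R u w"
| peq_cancel: "peq R [(x, e), (x, \<not> e)] []"
| peq_rel: "(u, w) \<in> R \<Longrightarrow> peq R u w"
| peq_cong: "peq R u u' \<Longrightarrow> peq R w w' \<Longrightarrow> peq R (u @ w) (u' @ w')"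

definition word_class :: "('g word \<times> 'g word) set \<Rightarrow> 'g word \<Rightarrow> 'g word set" where
  "word_class R w = {v. peq R w v}"

definition presented_group :: "'g set \<Rightarrow> ('g word \<times> 'g word) set \<Rightarrow> 'g word set monoid" where
  "presented_group S R =
     \<lparr> carrier = {word_class R w | w. fst ` set w \<subseteq> S},
       monoid.mult = (\<lambda>P Q. word_class R ((SOME u. u \<in> P) @ (SOME v. v \<in> Q))),
       one = word_class R [] \<rparr>"

definition pgen :: "('g word \<times> 'g word) set \<Rightarrow> 'g \<Rightarrow> 'g word set" where
  "pgen R x = word_class R [(x, False)]"

text \<open>lcs G k is Gamma_(k+1)(G): Gamma_1 = G, Gamma_(i+1) = [G, Gamma_i].\<close>

fun lcs :: "('a, 'b) monoid_scheme \<Rightarrow> nat \<Rightarrow> 'a set" where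
  "lcs G 0 = carrier G"
| "lcs G (Suc k) = generate G
     {x \<otimes>\<^bsub>G\<^esub> y \<otimes>\<^bsub>G\<^esub> inv\<^bsub>G\<^esub> x \<otimes>\<^bsub>G\<^esub> inv\<^bsub>G\<^esub> y | x y. x \<in> carrier G \<and> y \<in> lcs G k}"

definition Gamma :: "('a, 'b) monoid_scheme \<Rightarrow> nat \<Rightarrow> 'a set" where
  "Gamma G i = lcs G (i - 1)"

section \<open>Surface braid group B_n(Sigma_g), Sigma_g with one boundary component\<close>

datatype bgen = Sig nat | A nat | B nat

definition bgens :: "nat \<Rightarrow> nat \<Rightarrow> bgen set" where
  "bgens n g = {Sig i | i. 1 \<le> i \<and> i \<le> n - 1} \<union> {A i | i. 1 \<le> i \<and> i \<le> g} \<union> {B i | i. 1 \<le> i \<and> i \<le> g}"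

abbreviation lt :: "bgen \<Rightarrow> bgen word" where "lt x \<equiv> [(x, False)]"
abbreviation lti :: "bgen \<Rightarrow> bgen word" where "lti x \<equiv> [(x, True)]"

definition braid_rels :: "nat \<Rightarrow> nat \<Rightarrow> (bgen word \<times> bgen word) set" where
  "braid_rels n g =
     {(lt (Sig i) @ lt (Sig j), lt (Sig j) @ lt (Sig i)) | i j.
        1 \<le> i \<and> i \<le> n - 1 \<and> 1 \<le> j \<and> j \<le> n - 1 \<and> (i \<ge> j + 2 \<or> j \<ge> i + 2)}
   \<union> {(lt (Sig i) @ lt (Sig (i+1)) @ lt (Sig i), lt (Sig (i+1)) @ lt (Sig i) @ lt (Sig (i+1))) | i.
        1 \<le> i \<and> i \<le> n - 2}
   \<union> {(lt c @ lt (Sig j), lt (Sig j) @ lt c) | c i j.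
        1 \<le> i \<and> i \<le> g \<and> c \<in> {A i, B i} \<and> 2 \<le> j \<and> j \<le> n - 1}
   \<union> {(lt c @ lt (Sig 1) @ lt c @ lt (Sig 1), lt (Sig 1) @ lt c @ lt (Sig 1) @ lt c) | c i.
        1 \<le> i \<and> i \<le> g \<and> c \<in> {A i, B i}}
   \<union> {(lt (A i) @ lt (Sig 1) @ lt (B i),
        lt (Sig 1) @ lt (B i) @ lt (Sig 1) @ lt (A i) @ lt (Sig 1)) | i. 1 \<le> i \<and> i \<le> g}
   \<union> {(lt ci @ lti (Sig 1) @ lt cj @ lt (Sig 1), lti (Sig 1) @ lt cj @ lt (Sig 1) @ lt ci) | ci cj i j.
        1 \<le> j \<and> j < i \<and> i \<le> g \<and> ci \<in> {A i, B i} \<and> cj \<in> {A j, B j}}"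

definition braid_group :: "nat \<Rightarrow> nat \<Rightarrow> bgen word set monoid" where
  "braid_group n g = presented_group (bgens n g) (braid_rels n g)"

definition bclass :: "nat \<Rightarrow> nat \<Rightarrow> bgen \<Rightarrow> bgen word set" where
  "bclass n g x = pgen (braid_rels n g) x"

text \<open>The triple (p, m, k) (m, k supported on {1..g}) stands for the normal form
  sigma^p * prod_i a_i^(m i) * prod_i b_i^(k i).  Using b_j a_j b_j^-1 = sigma^-2 a_j,
  b_j a_l b_j^-1 = a_l (l ~= j), sigma central, the product is
  (p,m,k)(p',m',k') = (p + p' - 2 * sum_i k i * m' i, m + m', k + k').\<close>

definition sd_group :: "nat \<Rightarrow> (int \<times> (nat \<Rightarrow> int) \<times> (nat \<Rightarrow> int)) monoid" where
  "sd_group g =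
     \<lparr> carrier = {(p, m, k). \<forall>i. i \<notin> {1..g} \<longrightarrow> m i = 0 \<and> k i = 0},
       monoid.mult = (\<lambda>(p, m, k) (p', m', k').
                 (p + p' - 2 * (\<Sum>i\<in>{1..g}. k i * m' i), (\<lambda>i. m i + m' i), (\<lambda>i. k i + k' i))),
       one = (0, (\<lambda>_. 0), (\<lambda>_. 0)) \<rparr>"

definition sd_sigma :: "int \<times> (nat \<Rightarrow> int) \<times> (nat \<Rightarrow> int)" where
  "sd_sigma = (1, (\<lambda>_. 0), (\<lambda>_. 0))"

definition sd_a :: "nat \<Rightarrow> int \<times> (nat \<Rightarrow> int) \<times> (nat \<Rightarrow> int)" where
  "sd_a l = (0, (\<lambda>i. if i = l then 1 else 0), (\<lambda>_. 0))"

definition sd_b :: "nat \<Rightarrow> int \<times> (nat \<Rightarrow> int) \<times> (nat \<Rightarrow> int)" where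
  "sd_b l = (0, (\<lambda>_. 0), (\<lambda>i. if i = l then 1 else 0))"

end

theory Submission
  imports Defs
begin

(*
  Proof strategy.  Write B for the surface braid group B_n(Sigma_g) and H for the model
  group (Z x Z^g) x| Z^g, whose elements (p, m, k) stand for
  sigma^p a^m b^k.

  Sending every sigma_i to sigma, a_l to a_l and b_l to b_l respects the
     defining relations of B, so it induces a surjective homomorphism h : B -> H.
  2. Gamma_3(B) <= ker h.  H is nilpotent of class 2 (commutators are central), and any
     homomorphism into such a group kills Gamma_3.
  3. ker h <= Gamma_3(B).  In Q = B/Gamma_3 commutators are central; this turns the
     defining relations into: all sigma_i coincide (braid relation), sigma is central,
     generators of different handles commute, and a_l b_l = sigma^2 b_l a_l.  Hence the
     normal-form map nf(p, m, k) = sigma^p prod a_i^(m_i) prod b_i^(k_i) into Q satisfies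
     nf(u) * x = nf(u * h(x)) for every generator x, so the class of any word w in Q is
     nf(h(w)); if h(w) = 1 then w lies in Gamma_3.
  4. The first isomorphism theorem gives B/Gamma_3 = B/ker h ~ H, and the isomorphism
     sends the classes of the generators to their values under h.
*)

section \<open>Groups presented by generators and relations\<close>

lemma word_class_eq_iff: "word_class R u = word_class R v \<longleftrightarrow> peq R u v"
proof
  assume "word_class R u = word_class R v"
  then have "v \<in> word_class R u" by (simp add: word_class_def peq_refl)
  then show "peq R u v" by (simp add: word_class_def)
next
  assume "peq R u v"
  then show "word_class R u = word_class R v"
    unfolding word_class_def using peq_trans peq_sym by blast
qed

lemma word_class_some: "(SOME v. v \<in> word_class R w) \<in> word_class R w"
  by (rule someI[of _ w]) (simp add: word_class_def peq_refl)

lemma presented_mult: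
  "word_class R u \<otimes>\<^bsub>presented_group S R\<^esub> word_class R v = word_class R (u @ v)"
proof -
  have "peq R (u @ v) ((SOME x. x \<in> word_class R u) @ (SOME x. x \<in> word_class R v))"
    using word_class_some[of R u] word_class_some[of R v] by (simp add: word_class_def peq_cong)
  then show ?thesis
    by (simp add: presented_group_def word_class_eq_iff peq_sym)
qed

lemma presented_one: "\<one>\<^bsub>presented_group S R\<^esub> = word_class R []"
  by (simp add: presented_group_def)

lemma presented_carrierI: "fst ` set w \<subseteq> S \<Longrightarrow> word_class R w \<in> carrier (presented_group S R)"
  by (auto simp: presented_group_def)

lemma presented_carrierE:
  assumes "P \<in> carrier (presented_group S R)"
  obtains w where "P = word_class R w" "fst ` set w \<subseteq> S"
  using assms by (auto simp: presented_group_def)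

definition inv_word :: "'g word \<Rightarrow> 'g word" where
  "inv_word w = rev (map (\<lambda>(x, e). (x, \<not> e)) w)"

lemma inv_word_simps [simp]:
  "inv_word [] = []"
  "inv_word ((x, e) # w) = inv_word w @ [(x, \<not> e)]"
  by (simp_all add: inv_word_def)

lemma inv_word_letters [simp]: "fst ` set (inv_word w) = fst ` set w"
proof -
  have "fst ` set (inv_word w) = fst ` (\<lambda>(x, e). (x, \<not> e)) ` set w"
    by (simp add: inv_word_def)
  also have "\<dots> = fst ` set w" by (force simp: image_iff)
  finally show ?thesis .
qed

lemma peq_inv_word_right: "peq R (w @ inv_word w) []"
proof (induction w)
  case Nil
  then show ?case by (simp add: peq_refl)
next
  case (Cons xe w)
  obtain x e where xe: "xe = (x, e)" by force
  have "peq R ([(x, e)] @ ((w @ inv_word w) @ [(x, \<not> e)])) ([(x, e)] @ ([] @ [(x, \<not> e)]))"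
    by (intro peq_cong peq_refl Cons)
  then show ?case
    using peq_cancel peq_trans by (fastforce simp: xe)
qed

lemma peq_inv_word_left: "peq R (inv_word w @ w) []"
proof -
  have "inv_word (inv_word w) = w"
    by (simp add: inv_word_def rev_map comp_def case_prod_beta)
  then show ?thesis using peq_inv_word_right[of R "inv_word w"] by simp
qed

theorem presented_group_is_group: "group (presented_group S R)"
proof (rule groupI)
  fix x y
  assume "x \<in> carrier (presented_group S R)" "y \<in> carrier (presented_group S R)"
  then show "x \<otimes>\<^bsub>presented_group S R\<^esub> y \<in> carrier (presented_group S R)"
    by (auto elim!: presented_carrierE simp: presented_mult simp del: set_append
        intro!: presented_carrierI) (auto simp: image_Un)
next
  show "\<one>\<^bsub>presented_group S R\<^esub> \<in> carrier (presented_group S R)"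
    by (auto simp: presented_one intro!: presented_carrierI)
next
  fix x y z
  assume "x \<in> carrier (presented_group S R)" "y \<in> carrier (presented_group S R)"
    "z \<in> carrier (presented_group S R)"
  then show "x \<otimes>\<^bsub>presented_group S R\<^esub> y \<otimes>\<^bsub>presented_group S R\<^esub> z =
      x \<otimes>\<^bsub>presented_group S R\<^esub> (y \<otimes>\<^bsub>presented_group S R\<^esub> z)"
    by (auto elim!: presented_carrierE simp: presented_mult)
next
  fix x
  assume "x \<in> carrier (presented_group S R)"
  then show "\<one>\<^bsub>presented_group S R\<^esub> \<otimes>\<^bsub>presented_group S R\<^esub> x = x"
    by (auto elim!: presented_carrierE simp: presented_mult presented_one)
next
  fix x
  assume "x \<in> carrier (presented_group S R)"
  then obtain w where w: "x = word_class R w" "fst ` set w \<subseteq> S"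
    by (rule presented_carrierE)
  show "\<exists>y\<in>carrier (presented_group S R). y \<otimes>\<^bsub>presented_group S R\<^esub> x = \<one>\<^bsub>presented_group S R\<^esub>"
    using w peq_inv_word_left
    by (intro bexI[of _ "word_class R (inv_word w)"])
       (simp_all add: presented_mult presented_one word_class_eq_iff presented_carrierI)
qed

lemma presented_inv:
  "fst ` set w \<subseteq> S \<Longrightarrow> inv\<^bsub>presented_group S R\<^esub> (word_class R w) = word_class R (inv_word w)"
  by (rule group.inv_equality[OF presented_group_is_group])
     (simp_all add: presented_mult presented_one word_class_eq_iff peq_inv_word_left presented_carrierI)

lemma presented_rel: "(u, v) \<in> R \<Longrightarrow> word_class R u = word_class R v"
  by (simp add: word_class_eq_iff peq_rel)

lemma (in group) additive_int_map_closed: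
  fixes f :: "int \<Rightarrow> 'a"
  assumes H: "subgroup H G"
    and add: "\<And>s t. f (s + t) = f s \<otimes> f t"
    and closed: "\<And>t. f t \<in> carrier G"
    and one: "f 1 \<in> H"
  shows "f t \<in> H"
proof -
  interpret H: subgroup H G by (rule H)
  have "f 0 \<otimes> f 0 = f 0 \<otimes> \<one>" using add[of 0 0] closed[of 0] by simp
  then have f0: "f 0 = \<one>" using closed[of 0] by (metis l_cancel one_closed)
  have nat: "f (int k) \<in> H" for k
  proof (induction k)
    case 0
    then show ?case using f0 by simp
  next
    case (Suc k)
    then show ?case using add[of "int k" 1] one H.m_closed by (simp add: add.commute)
  qed
  have "f (- int k) = inv (f (int k))" for k
    using add[of "- int k" "int k"] closed f0 by (metis inv_equality add.left_inverse)
  then show ?thesis using nat H.m_inv_closed by (cases t rule: int_cases2) auto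
qed

lemma (in group) additive_vector_map_closed:
  fixes F :: "('i \<Rightarrow> int) \<Rightarrow> 'a"
  assumes H: "subgroup H G" and S: "finite S"
    and add: "\<And>m m'. F (\<lambda>i. m i + m' i) = F m \<otimes> F m'"
    and closed: "\<And>m. F m \<in> carrier G"
    and unit: "\<And>j. j \<in> S \<Longrightarrow> F (\<lambda>i. if i = j then 1 else 0) \<in> H"
    and supp: "\<And>i. i \<notin> S \<Longrightarrow> m i = 0"
  shows "F m \<in> H"
  using S unit supp
proof (induction S arbitrary: m rule: finite_induct)
  case empty
  have "m = (\<lambda>i. m i + m i)" using empty by (simp add: fun_eq_iff)
  then have "F m \<otimes> F m = F m \<otimes> \<one>" using add[of m m] closed[of m] by simp
  then have "F m = \<one>" using closed[of m] by (metis l_cancel one_closed)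
  then show ?case by (simp add: subgroup.one_closed[OF H])
next
  case (insert j S)
  define f where "f t = F (\<lambda>i. if i = j then t else 0)" for t
  have line: "f t \<in> H" for t
    by (rule additive_int_map_closed[OF H])
       (auto simp: f_def closed insert.prems add[symmetric] fun_eq_iff intro!: arg_cong[where f = F])
  have rest: "F (m(j := 0)) \<in> H"
    by (rule insert.IH) (use insert.prems in auto)
  have "m = (\<lambda>i. (m(j := 0)) i + (if i = j then m j else 0))" by auto
  then have "F m = F (m(j := 0)) \<otimes> f (m j)" by (metis add f_def)
  then show ?case using rest line subgroup.m_closed[OF H] by simp
qed

section \<open>Commutators and the lower central series\<close>

abbreviation (in group) commutator :: "'a \<Rightarrow> 'a \<Rightarrow> 'a" where
  "commutator x y \<equiv> x \<otimes> y \<otimes> inv x \<otimes> inv y"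

lemma (in group) inv_cancel_assoc [simp]:
  "x \<in> carrier G \<Longrightarrow> y \<in> carrier G \<Longrightarrow> inv x \<otimes> (x \<otimes> y) = y"
  "x \<in> carrier G \<Longrightarrow> y \<in> carrier G \<Longrightarrow> x \<otimes> (inv x \<otimes> y) = y"
  by (simp_all add: m_assoc[symmetric])

lemma (in group) commutator_one_imp_commute:
  assumes "x \<in> carrier G" "y \<in> carrier G" "commutator x y = \<one>"
  shows "x \<otimes> y = y \<otimes> x"
proof -
  have "x \<otimes> y = commutator x y \<otimes> (y \<otimes> x)"
    using assms(1,2) by (simp add: m_assoc)
  then show ?thesis using assms by simp
qed

lemma (in group) commutes_with_generate:
  assumes z: "z \<in> carrier G" and K: "K \<subseteq> carrier G"
    and comm: "\<And>k. k \<in> K \<Longrightarrow> z \<otimes> k = k \<otimes> z"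
    and x: "x \<in> generate G K"
  shows "z \<otimes> x = x \<otimes> z"
  using x
proof (induction rule: generate.induct)
  case one
  then show ?case using z by simp
next
  case (incl k)
  then show ?case by (rule comm)
next
  case (inv k)
  have k: "k \<in> carrier G" using inv K by blast
  have "inv k \<otimes> (z \<otimes> k) \<otimes> inv k = inv k \<otimes> (k \<otimes> z) \<otimes> inv k" using comm[OF inv] by simp
  then show ?case using k z by (simp add: m_assoc)
next
  case (eng x y)
  have "x \<in> carrier G" "y \<in> carrier G"
    using eng(1,2) generate_in_carrier[OF K] by auto
  then show ?case using eng z by (metis m_assoc)
qed

lemma (in group) lcs_normal: "lcs G k \<lhd> G"
proof (induction k)
  case 0
  then show ?case by (simp add: normal_self)
next
  case (Suc k)
  interpret N: normal "lcs G k" G by (rule Suc)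
  have conj_commutator: "h \<otimes> commutator x y \<otimes> inv h =
      commutator (h \<otimes> x \<otimes> inv h) (h \<otimes> y \<otimes> inv h)"
    if "h \<in> carrier G" "x \<in> carrier G" "y \<in> carrier G" for h x y
    using that by (simp add: m_assoc inv_mult_group)
  show ?case
    unfolding lcs.simps
  proof (rule normal_generateI)
    fix c h
    assume "c \<in> {commutator x y |x y. x \<in> carrier G \<and> y \<in> lcs G k}" and h: "h \<in> carrier G"
    then obtain x y where c: "c = commutator x y" "x \<in> carrier G" "y \<in> lcs G k" by blast
    have "h \<otimes> y \<otimes> inv h \<in> lcs G k" using Suc h c(3) normal_inv_iff by blast
    then show "h \<otimes> c \<otimes> inv h \<in> {commutator x y |x y. x \<in> carrier G \<and> y \<in> lcs G k}"
      using conj_commutator[OF h c(2)] c N.subset h by blast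
  qed (use N.subset in auto)
qed

lemma (in group) commutator_in_lcs:
  "x \<in> carrier G \<Longrightarrow> y \<in> lcs G k \<Longrightarrow> commutator x y \<in> lcs G (Suc k)"
  by (auto intro: generate.incl)

lemma (in group_hom) lcs2_subset_kernel:
  assumes central: "\<And>x y z. x \<in> carrier H \<Longrightarrow> y \<in> carrier H \<Longrightarrow> z \<in> carrier H \<Longrightarrow>
      z \<otimes>\<^bsub>H\<^esub> H.commutator x y = H.commutator x y \<otimes>\<^bsub>H\<^esub> z"
  shows "lcs G 2 \<subseteq> kernel G H h"
proof -
  define C where "C = {G.commutator x y |x y. x \<in> carrier G \<and> y \<in> carrier G}"
  have C: "C \<subseteq> carrier G" by (auto simp: C_def)
  have lcs1: "lcs G 1 = generate G C" by (simp add: C_def)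
  have image_central: "z \<otimes>\<^bsub>H\<^esub> h y = h y \<otimes>\<^bsub>H\<^esub> z" if "y \<in> lcs G 1" "z \<in> carrier H" for y z
  proof (rule H.commutes_with_generate[OF that(2)])
    show "h ` C \<subseteq> carrier H" using C by auto
    show "h y \<in> generate H (h ` C)"
      using imageI[OF that(1)[unfolded lcs1], of h] by (simp add: generate_img[OF C])
    show "z \<otimes>\<^bsub>H\<^esub> k = k \<otimes>\<^bsub>H\<^esub> z" if "k \<in> h ` C" for k
      using that central[OF _ _ \<open>z \<in> carrier H\<close>] by (auto simp: C_def)
  qed
  have "G.commutator x y \<in> kernel G H h" if "x \<in> carrier G" "y \<in> lcs G 1" for x y
  proof -
    have y: "y \<in> carrier G" using that(2) normal_imp_subgroup[OF G.lcs_normal] subgroup.subset by blast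
    have "h (G.commutator x y) = H.commutator (h x) (h y)" using that(1) y by simp
    also have "\<dots> = \<one>\<^bsub>H\<^esub>"
      using image_central[OF that(2), of "h x"] that(1) y by (simp add: H.m_assoc)
    finally show ?thesis using that(1) y by (simp add: kernel_def)
  qed
  then show ?thesis
    unfolding numeral_2_eq_2 lcs.simps(2)[of G "Suc 0"]
    by (intro G.generate_subgroup_incl subgroup_kernel) auto
qed

lemma (in group) lcs_quotient_hom:
  "group_hom G (G Mod lcs G k) (\<lambda>x. lcs G k #> x)"
proof -
  interpret N: normal "lcs G k" G by (rule lcs_normal)
  show ?thesis
    by (simp add: group_hom_def group_hom_axioms_def N.factorgroup_is_group N.r_coset_hom_Mod)
qed

lemma (in group) lcs2_quotient_commutators_central:
  assumes "u \<in> carrier (G Mod lcs G 2)" "v \<in> carrier (G Mod lcs G 2)" "w \<in> carrier (G Mod lcs G 2)"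
  shows "w \<otimes>\<^bsub>G Mod lcs G 2\<^esub> group.commutator (G Mod lcs G 2) u v =
    group.commutator (G Mod lcs G 2) u v \<otimes>\<^bsub>G Mod lcs G 2\<^esub> w"
proof -
  interpret \<pi>: group_hom G "G Mod lcs G 2" "\<lambda>x. lcs G 2 #> x" by (rule lcs_quotient_hom)
  interpret N: normal "lcs G 2" G by (rule lcs_normal)
  have rep: "\<exists>x\<in>carrier G. q = lcs G 2 #> x" if "q \<in> carrier (G Mod lcs G 2)" for q
    using that by (auto simp: FactGroup_def RCOSETS_def)
  obtain x y z where xyz: "x \<in> carrier G" "y \<in> carrier G" "z \<in> carrier G"
    and u: "u = lcs G 2 #> x" and v: "v = lcs G 2 #> y" and w: "w = lcs G 2 #> z"
    using rep[OF assms(1)] rep[OF assms(2)] rep[OF assms(3)] by blast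
  have c: "commutator x y \<in> lcs G 1" "commutator x y \<in> carrier G"
    using commutator_in_lcs[of x y 0] xyz by (simp_all only: lcs.simps(1) One_nat_def m_closed inv_closed)
  have "\<pi>.H.commutator w (\<pi>.H.commutator u v) = lcs G 2 #> commutator z (commutator x y)"
    unfolding u v w using xyz c(2) by (simp only: \<pi>.hom_mult \<pi>.hom_inv m_closed inv_closed)
  also have "\<dots> = \<one>\<^bsub>G Mod lcs G 2\<^esub>"
  proof -
    have "commutator z (commutator x y) \<in> lcs G 2"
      using commutator_in_lcs[OF xyz(3) c(1)] by (simp only: numeral_2_eq_2 One_nat_def)
    then show ?thesis by (simp only: one_FactGroup N.rcos_const[OF is_group])
  qed
  finally show ?thesis
    using \<pi>.H.commutator_one_imp_commute assms by (meson \<pi>.H.m_closed \<pi>.H.inv_closed)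
qed

context group
begin

lemma braid_relation_imp_eq:
  assumes central: "\<And>u v w. u \<in> carrier G \<Longrightarrow> v \<in> carrier G \<Longrightarrow> w \<in> carrier G \<Longrightarrow>
      w \<otimes> commutator u v = commutator u v \<otimes> w"
    and x: "x \<in> carrier G" and y: "y \<in> carrier G" and braid: "x \<otimes> y \<otimes> x = y \<otimes> x \<otimes> y"
  shows "x = y"
proof -
  define d where "d = commutator y x"
  have d: "d \<in> carrier G" using x y by (simp add: d_def)
  have yx: "y \<otimes> x = d \<otimes> x \<otimes> y" using x y by (simp add: d_def m_assoc)
  have xd: "x \<otimes> d = d \<otimes> x" unfolding d_def by (rule central[OF y x x])
  have "(d \<otimes> x) \<otimes> (x \<otimes> y) = x \<otimes> (d \<otimes> x \<otimes> y)" using x y d by (simp add: m_assoc[symmetric] xd)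
  also have "\<dots> = x \<otimes> y \<otimes> x" using x y d by (simp add: yx[symmetric] m_assoc)
  also have "\<dots> = y \<otimes> x \<otimes> y" by (rule braid)
  also have "\<dots> = (d \<otimes> x) \<otimes> (y \<otimes> y)" using x y d by (simp add: yx m_assoc)
  finally have "x \<otimes> y = y \<otimes> y" using x y d by simp
  then show ?thesis using x y by simp
qed

lemma genus_relation_twist:
  assumes a: "a \<in> carrier G" and b: "b \<in> carrier G" and s: "s \<in> carrier G"
    and sa: "s \<otimes> a = a \<otimes> s" and sb: "s \<otimes> b = b \<otimes> s"
    and rel: "a \<otimes> s \<otimes> b = s \<otimes> b \<otimes> s \<otimes> a \<otimes> s"
  shows "a \<otimes> b = s [^] (2::int) \<otimes> b \<otimes> a"
proof -
  have "s \<otimes> (a \<otimes> b) = a \<otimes> s \<otimes> b" using a b s by (simp add: m_assoc[symmetric] sa)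
  also have "\<dots> = s \<otimes> b \<otimes> s \<otimes> a \<otimes> s" by (rule rel)
  also have "\<dots> = s \<otimes> (s \<otimes> s \<otimes> b \<otimes> a)"
    using a b s by (simp add: m_assoc sa[symmetric]) (simp add: m_assoc[symmetric] sb)
  finally have "a \<otimes> b = s \<otimes> s \<otimes> b \<otimes> a" using a b s by simp
  moreover have "s [^] (2::int) = s \<otimes> s"
    using s int_pow_int[of G s 2] by (simp add: numeral_2_eq_2)
  ultimately show ?thesis by simp
qed

lemma conjugate_commute_relation:
  assumes a: "a \<in> carrier G" and b: "b \<in> carrier G" and s: "s \<in> carrier G"
    and sb: "s \<otimes> b = b \<otimes> s"
    and rel: "a \<otimes> inv s \<otimes> b \<otimes> s = inv s \<otimes> b \<otimes> s \<otimes> a"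
  shows "a \<otimes> b = b \<otimes> a"
proof -
  have conj: "inv s \<otimes> b \<otimes> s = b" using b s by (simp add: m_assoc sb[symmetric])
  have "a \<otimes> b = a \<otimes> (inv s \<otimes> b \<otimes> s)" by (simp only: conj)
  also have "\<dots> = a \<otimes> inv s \<otimes> b \<otimes> s" using a b s by (simp add: m_assoc)
  also have "\<dots> = inv s \<otimes> b \<otimes> s \<otimes> a" by (rule rel)
  finally show ?thesis by (simp only: conj)
qed

lemma twist_pow_nat:
  assumes x: "x \<in> carrier G" and y: "y \<in> carrier G" and z: "z \<in> carrier G"
    and xz: "x \<otimes> z = z \<otimes> x" and xy: "x \<otimes> y = z \<otimes> y \<otimes> x"
  shows "x [^] (n::nat) \<otimes> y = z [^] n \<otimes> y \<otimes> x [^] n"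
proof (induction n)
  case 0
  then show ?case using y by simp
next
  case (Suc n)
  have xzn: "x \<otimes> z [^] n = z [^] n \<otimes> x" using group_commutes_pow[OF xz[symmetric] z x] by simp
  have "x [^] Suc n \<otimes> y = x \<otimes> (x [^] n \<otimes> y)"
    using x y by (subst nat_pow_Suc2[OF x]) (simp add: m_assoc)
  also have "\<dots> = x \<otimes> (z [^] n \<otimes> y \<otimes> x [^] n)" by (simp only: Suc)
  also have "\<dots> = z [^] n \<otimes> (x \<otimes> y) \<otimes> x [^] n"
    using x y z by (simp add: m_assoc[symmetric] xzn)
  also have "\<dots> = z [^] Suc n \<otimes> y \<otimes> x [^] Suc n"
    using x y z by (simp add: xy m_assoc nat_pow_Suc2[OF x, symmetric])
  finally show ?case .
qed

lemma twist_pow: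
  assumes x: "x \<in> carrier G" and y: "y \<in> carrier G" and z: "z \<in> carrier G"
    and xz: "x \<otimes> z = z \<otimes> x" and xy: "x \<otimes> y = z \<otimes> y \<otimes> x"
  shows "x [^] (n::int) \<otimes> y = z [^] n \<otimes> y \<otimes> x [^] n"
proof (cases "n \<ge> 0")
  case True
  then obtain k where "n = int k" by (rule nonneg_int_cases)
  then show ?thesis using twist_pow_nat[OF x y z xz xy, of k] by (simp add: int_pow_int)
next
  case False
  have ixz: "inv x \<otimes> inv z = inv z \<otimes> inv x"
    using x z xz by (simp add: inv_mult_group[symmetric])
  have xiz: "x \<otimes> inv z = inv z \<otimes> x"
  proof -
    have "x \<otimes> inv z = inv z \<otimes> (z \<otimes> x) \<otimes> inv z" using x z by (simp add: m_assoc)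
    also have "\<dots> = inv z \<otimes> x" using x z by (simp add: xz[symmetric] m_assoc)
    finally show ?thesis .
  qed
  have "inv x \<otimes> y = inv x \<otimes> (inv z \<otimes> (z \<otimes> y \<otimes> x)) \<otimes> inv x"
    using x y z by (simp add: m_assoc)
  also have "\<dots> = inv x \<otimes> (inv z \<otimes> (x \<otimes> y)) \<otimes> inv x" by (simp only: xy)
  also have "\<dots> = inv x \<otimes> ((inv z \<otimes> x) \<otimes> y) \<otimes> inv x"
    using x y z by (simp add: m_assoc)
  also have "\<dots> = inv x \<otimes> ((x \<otimes> inv z) \<otimes> y) \<otimes> inv x" by (simp only: xiz)
  also have "\<dots> = inv z \<otimes> y \<otimes> inv x"
    using x y z by (simp add: m_assoc)
  finally have ixy: "inv x \<otimes> y = inv z \<otimes> y \<otimes> inv x" .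
  define k where "k = nat (- n)"
  have "n = - int k" using False by (simp add: k_def)
  then have "x [^] n = inv x [^] k" "z [^] n = inv z [^] k"
    using x z by (simp_all add: int_pow_neg int_pow_int nat_pow_inv)
  then show ?thesis
    using twist_pow_nat[OF inv_closed[OF x] y inv_closed[OF z] ixz ixy, of k] by (simp only:)
qed

lemma commute_pow:
  assumes "x \<in> carrier G" "y \<in> carrier G" "x \<otimes> y = y \<otimes> x"
  shows "x [^] (n::int) \<otimes> y = y \<otimes> x [^] n"
  using twist_pow[OF assms(1,2) one_closed, of n] assms by simp

end

lemma right_mult_compatible_inv:
  assumes G: "group G" and H: "group H"
    and \<psi>: "\<And>u. u \<in> carrier H \<Longrightarrow> \<psi> u \<in> carrier G"
    and c: "c \<in> carrier G" and d: "d \<in> carrier H"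
    and compat: "\<And>u. u \<in> carrier H \<Longrightarrow> \<psi> u \<otimes>\<^bsub>G\<^esub> c = \<psi> (u \<otimes>\<^bsub>H\<^esub> d)"
    and u: "u \<in> carrier H"
  shows "\<psi> u \<otimes>\<^bsub>G\<^esub> inv\<^bsub>G\<^esub> c = \<psi> (u \<otimes>\<^bsub>H\<^esub> inv\<^bsub>H\<^esub> d)"
proof -
  interpret G: group G by (rule G)
  interpret H: group H by (rule H)
  define u' where "u' = u \<otimes>\<^bsub>H\<^esub> inv\<^bsub>H\<^esub> d"
  have u': "u' \<in> carrier H" using u d by (simp add: u'_def)
  have "\<psi> u = \<psi> u' \<otimes>\<^bsub>G\<^esub> c"
    using compat[OF u'] u d by (simp add: u'_def H.m_assoc)
  then have "\<psi> u \<otimes>\<^bsub>G\<^esub> inv\<^bsub>G\<^esub> c = \<psi> u'"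
    using \<psi>[OF u'] c by (simp add: G.m_assoc)
  then show ?thesis by (simp add: u'_def)
qed

context group
begin

definition pow_prod :: "(nat \<Rightarrow> 'a) \<Rightarrow> nat list \<Rightarrow> (nat \<Rightarrow> int) \<Rightarrow> 'a" where
  "pow_prod f L m = foldr (\<lambda>i r. f i [^] m i \<otimes> r) L \<one>"

lemma pow_prod_simps [simp]:
  "pow_prod f [] m = \<one>"
  "pow_prod f (i # L) m = f i [^] m i \<otimes> pow_prod f L m"
  by (simp_all add: pow_prod_def)

lemma pow_prod_closed: "(\<And>i. i \<in> set L \<Longrightarrow> f i \<in> carrier G) \<Longrightarrow> pow_prod f L m \<in> carrier G"
  by (induction L) auto

lemma pow_prod_zero: "pow_prod f L (\<lambda>_. 0) = \<one>"
  by (induction L) auto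

lemma pow_prod_update_notin: "j \<notin> set L \<Longrightarrow> pow_prod f L (m(j := t)) = pow_prod f L m"
  by (induction L) auto

lemma pow_prod_twist:
  assumes f: "\<And>i. i \<in> set L \<Longrightarrow> f i \<in> carrier G"
    and y: "y \<in> carrier G" and z: "z \<in> carrier G"
    and fz: "\<And>i. i \<in> set L \<Longrightarrow> f i \<otimes> z = z \<otimes> f i"
    and fy: "\<And>i. i \<in> set L \<Longrightarrow> f i \<otimes> y = (if i = j then z else \<one>) \<otimes> y \<otimes> f i"
    and L: "distinct L"
  shows "pow_prod f L m \<otimes> y = z [^] (if j \<in> set L then m j else 0) \<otimes> y \<otimes> pow_prod f L m"
  using f fz fy L
proof (induction L)
  case Nil
  then show ?case using y by simp
next
  case (Cons i L)
  have fi: "f i \<in> carrier G" and P: "pow_prod f L m \<in> carrier G"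
    using Cons.prems(1) by (auto intro: pow_prod_closed)
  define e where "e = (if j \<in> set L then m j else 0)"
  define w where "w = (if i = j then z else \<one>)"
  have w: "w \<in> carrier G" using z by (simp add: w_def)
  have IH: "pow_prod f L m \<otimes> y = z [^] e \<otimes> y \<otimes> pow_prod f L m"
    using Cons by (auto simp: e_def)
  have fi_y: "f i [^] m i \<otimes> y = w [^] m i \<otimes> y \<otimes> f i [^] m i"
    by (rule twist_pow[OF fi y w]) (use Cons.prems z in \<open>auto simp: w_def\<close>)
  have "f i \<otimes> z [^] e = z [^] e \<otimes> f i"
    using commute_pow[OF z fi] Cons.prems(2)[of i] by simp
  then have fi_z: "z [^] e \<otimes> f i [^] m i = f i [^] m i \<otimes> z [^] e"
    using commute_pow[OF fi int_pow_closed[OF z], where n = "m i"] by simp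
  have "f i [^] m i \<otimes> pow_prod f L m \<otimes> y = (f i [^] m i \<otimes> z [^] e) \<otimes> y \<otimes> pow_prod f L m"
    using fi P y z by (simp add: m_assoc IH)
  also have "\<dots> = z [^] e \<otimes> (f i [^] m i \<otimes> y) \<otimes> pow_prod f L m"
    using fi P y z by (simp add: m_assoc[symmetric] fi_z)
  also have "\<dots> = (z [^] e \<otimes> w [^] m i) \<otimes> y \<otimes> (f i [^] m i \<otimes> pow_prod f L m)"
    using fi P y z w by (simp add: m_assoc fi_y)
  also have "z [^] e \<otimes> w [^] m i = z [^] (if j \<in> set (i # L) then m j else 0)"
    using Cons.prems(4) z by (cases "i = j") (auto simp: e_def w_def)
  finally show ?case by simp
qed

lemma pow_prod_commute:
  assumes f: "\<And>i. i \<in> set L \<Longrightarrow> f i \<in> carrier G" and y: "y \<in> carrier G"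
    and fy: "\<And>i. i \<in> set L \<Longrightarrow> f i \<otimes> y = y \<otimes> f i" and L: "distinct L"
  shows "pow_prod f L m \<otimes> y = y \<otimes> pow_prod f L m"
  using pow_prod_twist[OF f y one_closed _ _ L, where j = undefined and m = m] f y fy by simp

lemma pow_prod_mult_factor:
  assumes f: "\<And>i. i \<in> set L \<Longrightarrow> f i \<in> carrier G"
    and ff: "\<And>i. i \<in> set L \<Longrightarrow> f i \<otimes> f j = f j \<otimes> f i"
    and L: "distinct L" and j: "j \<in> set L"
  shows "pow_prod f L m \<otimes> f j = pow_prod f L (m(j := m j + 1))"
  using f ff L j
proof (induction L)
  case Nil
  then show ?case by simp
next
  case (Cons i L)
  have fi: "f i \<in> carrier G" and fj: "f j \<in> carrier G" and P: "pow_prod f L m \<in> carrier G"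
    using Cons.prems(1,4) by (auto intro: pow_prod_closed)
  show ?case
  proof (cases "i = j")
    case True
    then have jL: "j \<notin> set L" using Cons.prems(3) by auto
    have "pow_prod f L m \<otimes> f j = f j \<otimes> pow_prod f L m"
      by (rule pow_prod_commute) (use Cons.prems in auto)
    then have "f j [^] m j \<otimes> pow_prod f L m \<otimes> f j = f j [^] m j \<otimes> f j \<otimes> pow_prod f L m"
      using fj P by (simp add: m_assoc)
    also have "f j [^] m j \<otimes> f j = f j [^] (m j + 1)"
      using fj by (simp add: int_pow_mult)
    finally have "pow_prod f (i # L) m \<otimes> f j = f j [^] (m j + 1) \<otimes> pow_prod f L m"
      using True by simp
    then show ?thesis
      using True by (simp only: pow_prod_simps fun_upd_same pow_prod_update_notin[OF jL])
  next
    case False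
    have IH: "pow_prod f L m \<otimes> f j = pow_prod f L (m(j := m j + 1))"
      by (rule Cons.IH) (use Cons.prems False in auto)
    show ?thesis using False fi P fj by (simp add: m_assoc IH fun_upd_def)
  qed
qed

end

section \<open>The model group \<open>(\<int> \<times> \<int>\<^sup>g) \<rtimes> \<int>\<^sup>g\<close>\<close>

lemma sd_mult [simp]: "(p, m, k) \<otimes>\<^bsub>sd_group g\<^esub> (p', m', k') =
   (p + p' - 2 * (\<Sum>i\<in>{1..g}. k i * m' i), (\<lambda>i. m i + m' i), (\<lambda>i. k i + k' i))"
  by (simp add: sd_group_def)

lemma sd_one [simp]: "\<one>\<^bsub>sd_group g\<^esub> = (0, (\<lambda>_. 0), (\<lambda>_. 0))"
  by (simp add: sd_group_def)

lemma sd_carrier [simp]: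
  "(p, m, k) \<in> carrier (sd_group g) \<longleftrightarrow> (\<forall>i. i \<notin> {1..g} \<longrightarrow> m i = 0 \<and> k i = 0)"
  by (simp add: sd_group_def)

theorem sd_group_is_group: "group (sd_group g)"
proof (rule groupI)
  fix x y
  assume "x \<in> carrier (sd_group g)" "y \<in> carrier (sd_group g)"
  then show "x \<otimes>\<^bsub>sd_group g\<^esub> y \<in> carrier (sd_group g)"
    by (cases x; cases y) auto
next
  fix x y z
  show "x \<otimes>\<^bsub>sd_group g\<^esub> y \<otimes>\<^bsub>sd_group g\<^esub> z = x \<otimes>\<^bsub>sd_group g\<^esub> (y \<otimes>\<^bsub>sd_group g\<^esub> z)"
    by (cases x; cases y; cases z) (auto simp: algebra_simps sum.distrib)
next
  fix x
  show "\<one>\<^bsub>sd_group g\<^esub> \<otimes>\<^bsub>sd_group g\<^esub> x = x" by (cases x) simp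
next
  fix x
  assume "x \<in> carrier (sd_group g)"
  then obtain p m k where x: "x = (p, m, k)" "\<forall>i. i \<notin> {1..g} \<longrightarrow> m i = 0 \<and> k i = 0"
    by (cases x) auto
  show "\<exists>y\<in>carrier (sd_group g). y \<otimes>\<^bsub>sd_group g\<^esub> x = \<one>\<^bsub>sd_group g\<^esub>"
    by (rule bexI[of _ "(- p - 2 * (\<Sum>i\<in>{1..g}. k i * m i), (\<lambda>i. - m i), (\<lambda>i. - k i))"])
       (use x in \<open>auto simp: sum_negf\<close>)
qed (simp)

lemma sd_inv:
  "(p, m, k) \<in> carrier (sd_group g) \<Longrightarrow>
   inv\<^bsub>sd_group g\<^esub> (p, m, k) = (- p - 2 * (\<Sum>i\<in>{1..g}. k i * m i), (\<lambda>i. - m i), (\<lambda>i. - k i))"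
  by (rule group.inv_equality[OF sd_group_is_group]) (auto simp: sum_negf)

text \<open>The group is nilpotent of class 2: every commutator lies in the central
  subgroup generated by \<open>\<sigma>\<close>.\<close>

lemma sd_commutator_central:
  assumes "x \<in> carrier (sd_group g)" "y \<in> carrier (sd_group g)" "z \<in> carrier (sd_group g)"
  defines "c \<equiv> x \<otimes>\<^bsub>sd_group g\<^esub> y \<otimes>\<^bsub>sd_group g\<^esub> inv\<^bsub>sd_group g\<^esub> x \<otimes>\<^bsub>sd_group g\<^esub> inv\<^bsub>sd_group g\<^esub> y"
  shows "z \<otimes>\<^bsub>sd_group g\<^esub> c = c \<otimes>\<^bsub>sd_group g\<^esub> z"
proof -
  obtain p where "c = (p, (\<lambda>_. 0), (\<lambda>_. 0))"
    using assms(1,2) unfolding c_def by (cases x; cases y) (auto simp: sd_inv simp del: sd_carrier)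
  then show ?thesis by (cases z) simp
qed

text \<open>Every element factors as \<open>\<sigma>\<^sup>p \<cdot> a\<^sup>m \<cdot> b\<^sup>k\<close>, so the group is generated by
  \<open>\<sigma>\<close>, the \<open>a\<^sub>j\<close> and the \<open>b\<^sub>j\<close>.\<close>

lemma sd_generated:
  assumes I: "subgroup I (sd_group g)" and sigma: "sd_sigma \<in> I"
    and ab: "\<And>j. j \<in> {1..g} \<Longrightarrow> sd_a j \<in> I \<and> sd_b j \<in> I"
  shows "carrier (sd_group g) \<subseteq> I"
proof
  interpret G: group "sd_group g" by (rule sd_group_is_group)
  fix x
  assume "x \<in> carrier (sd_group g)"
  then obtain p m k where x: "x = (p, m, k)" and supp: "\<forall>i. i \<notin> {1..g} \<longrightarrow> m i = 0 \<and> k i = 0"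
    by (cases x) auto
  define restr where "restr v = (\<lambda>i. if i \<in> {1..g} then v i else 0)" for v :: "nat \<Rightarrow> int"
  have restr_unit: "restr (\<lambda>i. if i = j then 1 else 0) = (\<lambda>i. if i = j then 1 else 0)"
    if "j \<in> {1..g}" for j
    using that by (auto simp: restr_def)
  have "(p, (\<lambda>_. 0), (\<lambda>_. 0)) \<in> I"
    by (rule G.additive_int_map_closed[OF I, where f = "\<lambda>p. (p, (\<lambda>_. 0), (\<lambda>_. 0))"])
       (use sigma in \<open>auto simp: sd_sigma_def\<close>)
  moreover have "(0, restr m, (\<lambda>_. 0)) \<in> I"
  proof (rule G.additive_vector_map_closed[OF I, where F = "\<lambda>m. (0, restr m, (\<lambda>_. 0))"])
    show "(0, restr (\<lambda>i. if i = j then 1 else 0), (\<lambda>_. 0)) \<in> I" if "j \<in> {1..g}" for j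
      using ab[OF that] by (simp add: restr_unit[OF that] sd_a_def)
  qed (use supp in \<open>auto simp: restr_def fun_eq_iff\<close>)
  moreover have "(0, (\<lambda>_. 0), restr k) \<in> I"
  proof (rule G.additive_vector_map_closed[OF I, where F = "\<lambda>k. (0, (\<lambda>_. 0), restr k)"])
    show "(0, (\<lambda>_. 0), restr (\<lambda>i. if i = j then 1 else 0)) \<in> I" if "j \<in> {1..g}" for j
      using ab[OF that] by (simp add: restr_unit[OF that] sd_b_def)
  qed (use supp in \<open>auto simp: restr_def fun_eq_iff\<close>)
  moreover have "restr m = m" "restr k = k" using supp by (auto simp: restr_def fun_eq_iff)
  ultimately have "(p, (\<lambda>_. 0), (\<lambda>_. 0)) \<otimes>\<^bsub>sd_group g\<^esub> (0, m, (\<lambda>_. 0))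
      \<otimes>\<^bsub>sd_group g\<^esub> (0, (\<lambda>_. 0), k) \<in> I"
    by (metis subgroup.m_closed[OF I])
  then show "x \<in> I" by (simp add: x)
qed

text \<open>Each \<open>\<sigma>\<^sub>i\<close> is sent to \<open>\<sigma>\<close>, \<open>a\<^sub>l\<close> to \<open>a\<^sub>l\<close> and \<open>b\<^sub>l\<close> to \<open>b\<^sub>l\<close>; letters outside the
  generating set are sent to the identity.\<close>

definition sd_gen :: "nat \<Rightarrow> bgen \<Rightarrow> int \<times> (nat \<Rightarrow> int) \<times> (nat \<Rightarrow> int)" where
  "sd_gen g x = (case x of
       Sig i \<Rightarrow> sd_sigma
     | A l \<Rightarrow> if l \<in> {1..g} then sd_a l else \<one>\<^bsub>sd_group g\<^esub>
     | B l \<Rightarrow> if l \<in> {1..g} then sd_b l else \<one>\<^bsub>sd_group g\<^esub>)"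

definition sd_letter :: "nat \<Rightarrow> bgen \<Rightarrow> bool \<Rightarrow> int \<times> (nat \<Rightarrow> int) \<times> (nat \<Rightarrow> int)" where
  "sd_letter g x e = (if e then inv\<^bsub>sd_group g\<^esub> (sd_gen g x) else sd_gen g x)"

fun sd_eval :: "nat \<Rightarrow> bgen word \<Rightarrow> int \<times> (nat \<Rightarrow> int) \<times> (nat \<Rightarrow> int)" where
  "sd_eval g [] = \<one>\<^bsub>sd_group g\<^esub>"
| "sd_eval g ((x, e) # w) = sd_letter g x e \<otimes>\<^bsub>sd_group g\<^esub> sd_eval g w"

lemma sd_gen_simps:
  "sd_gen g (Sig i) = sd_sigma"
  "l \<in> {1..g} \<Longrightarrow> sd_gen g (A l) = sd_a l"
  "l \<in> {1..g} \<Longrightarrow> sd_gen g (B l) = sd_b l"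
  by (simp_all add: sd_gen_def del: atLeastAtMost_iff)

lemma sum_delta_product:
  "finite I \<Longrightarrow> (\<Sum>i\<in>I. (if i = l then (c::int) else 0) * (if i = j then d else 0)) =
     (if l = j \<and> l \<in> I then c * d else 0)"
  by (simp add: if_distrib[of "\<lambda>x. x * _"] sum.delta' cong: if_cong)

context
  fixes g :: nat
begin

interpretation SD: group "sd_group g" by (rule sd_group_is_group)

lemma sd_gen_closed: "sd_gen g x \<in> carrier (sd_group g)"
  by (auto simp: sd_gen_def sd_sigma_def sd_a_def sd_b_def split: bgen.split)

lemma sd_letter_closed [simp]: "sd_letter g x e \<in> carrier (sd_group g)"
  by (simp add: sd_letter_def sd_gen_closed)

lemma sd_eval_closed [simp]: "sd_eval g w \<in> carrier (sd_group g)"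
  by (induction w) (auto simp del: sd_one sd_mult)

lemma sd_eval_append: "sd_eval g (u @ w) = sd_eval g u \<otimes>\<^bsub>sd_group g\<^esub> sd_eval g w"
  by (induction u) (auto simp del: sd_one sd_mult simp: SD.m_assoc)

lemma sd_letter_simps [simp]:
  "sd_letter g (Sig i) False = (1, (\<lambda>_. 0), (\<lambda>_. 0))"
  "sd_letter g (Sig i) True = (-1, (\<lambda>_. 0), (\<lambda>_. 0))"
  "l \<in> {1..g} \<Longrightarrow> sd_letter g (A l) False = (0, (\<lambda>i. if i = l then 1 else 0), (\<lambda>_. 0))"
  "l \<in> {1..g} \<Longrightarrow> sd_letter g (B l) False = (0, (\<lambda>_. 0), (\<lambda>i. if i = l then 1 else 0))"
  by (simp_all add: sd_letter_def sd_gen_simps sd_sigma_def sd_a_def sd_b_def sd_inv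
        del: atLeastAtMost_iff)

text \<open>The defining relations of \<open>B\<^sub>n(\<Sigma>\<^sub>g)\<close> hold in the model; the only non-trivial one is
  \<open>a\<^sub>i\<sigma>\<^sub>1b\<^sub>i = \<sigma>\<^sub>1b\<^sub>i\<sigma>\<^sub>1a\<^sub>i\<sigma>\<^sub>1\<close>, which is exactly where \<open>b\<^sub>i a\<^sub>i = \<sigma>\<^sup>-\<^sup>2 a\<^sub>i b\<^sub>i\<close> comes from.\<close>

lemma sd_eval_rel: "(u, v) \<in> braid_rels n g \<Longrightarrow> sd_eval g u = sd_eval g v"
  unfolding braid_rels_def by (elim UnE) (auto simp: sum_delta_product fun_eq_iff)

lemma sd_eval_peq: "peq (braid_rels n g) u v \<Longrightarrow> sd_eval g u = sd_eval g v"
proof (induction rule: peq.induct)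
  case (peq_cancel x e)
  show ?case
    by (cases e) (simp_all del: sd_one sd_mult add: sd_letter_def SD.m_assoc[symmetric] sd_gen_closed)
next
  case (peq_rel u w)
  then show ?case by (rule sd_eval_rel)
next
  case (peq_cong u u' w w')
  then show ?case by (simp add: sd_eval_append)
qed auto

end

definition braid_to_sd :: "nat \<Rightarrow> nat \<Rightarrow> bgen word set \<Rightarrow> int \<times> (nat \<Rightarrow> int) \<times> (nat \<Rightarrow> int)" where
  "braid_to_sd n g P = sd_eval g (SOME w. w \<in> P)"

lemma braid_to_sd_class: "braid_to_sd n g (word_class (braid_rels n g) w) = sd_eval g w"
  using word_class_some[of "braid_rels n g" w]
  by (auto simp: braid_to_sd_def word_class_def intro!: sd_eval_peq[symmetric])

lemma bclass_eq: "bclass n g x = word_class (braid_rels n g) [(x, False)]"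
  by (simp add: bclass_def pgen_def)

lemma braid_to_sd_bclass: "braid_to_sd n g (bclass n g x) = sd_gen g x"
  using sd_gen_closed[of g x]
  by (simp add: bclass_eq braid_to_sd_class sd_letter_def del: sd_mult sd_one)
     (simp add: monoid.r_one[OF group.is_monoid[OF sd_group_is_group]] del: sd_mult sd_one)

lemma braid_group_is_group: "group (braid_group n g)"
  by (simp add: braid_group_def presented_group_is_group)

lemma braid_to_sd_hom: "braid_to_sd n g \<in> hom (braid_group n g) (sd_group g)"
proof (rule homI)
  fix x
  assume "x \<in> carrier (braid_group n g)"
  then show "braid_to_sd n g x \<in> carrier (sd_group g)"
    by (auto simp: braid_group_def braid_to_sd_class simp del: sd_carrier elim!: presented_carrierE)
next
  fix x y
  assume "x \<in> carrier (braid_group n g)" "y \<in> carrier (braid_group n g)"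
  then show "braid_to_sd n g (x \<otimes>\<^bsub>braid_group n g\<^esub> y) =
      braid_to_sd n g x \<otimes>\<^bsub>sd_group g\<^esub> braid_to_sd n g y"
    by (auto simp: braid_group_def braid_to_sd_class presented_mult sd_eval_append
        simp del: sd_mult elim!: presented_carrierE)
qed

lemma braid_word_closed:
  "fst ` set w \<subseteq> bgens n g \<Longrightarrow> word_class (braid_rels n g) w \<in> carrier (braid_group n g)"
  by (simp add: braid_group_def presented_carrierI)

lemma bclass_closed: "x \<in> bgens n g \<Longrightarrow> bclass n g x \<in> carrier (braid_group n g)"
  by (simp add: bclass_eq braid_word_closed)

text \<open>The evaluation is onto, since its image contains the generators of the model.\<close>

lemma braid_to_sd_surj:
  assumes n: "n \<ge> 2"
  shows "braid_to_sd n g ` carrier (braid_group n g) = carrier (sd_group g)"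
proof
  interpret h: group_hom "braid_group n g" "sd_group g" "braid_to_sd n g"
    by (simp add: group_hom_def group_hom_axioms_def braid_group_is_group sd_group_is_group braid_to_sd_hom)
  show "braid_to_sd n g ` carrier (braid_group n g) \<subseteq> carrier (sd_group g)" by auto
  have image_gen: "sd_gen g x \<in> braid_to_sd n g ` carrier (braid_group n g)" if "x \<in> bgens n g" for x
    using bclass_closed[OF that] braid_to_sd_bclass[of n g x] by (metis image_eqI)
  show "carrier (sd_group g) \<subseteq> braid_to_sd n g ` carrier (braid_group n g)"
  proof (rule sd_generated[OF h.img_is_subgroup])
    show "sd_sigma \<in> braid_to_sd n g ` carrier (braid_group n g)"
      using image_gen[of "Sig 1"] sd_gen_simps(1) n by (simp add: bgens_def)
    show "sd_a j \<in> braid_to_sd n g ` carrier (braid_group n g) \<and>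
        sd_b j \<in> braid_to_sd n g ` carrier (braid_group n g)" if "j \<in> {1..g}" for j
      using image_gen[of "A j"] image_gen[of "B j"] sd_gen_simps(2,3)[OF that] that
      by (simp add: bgens_def)
  qed
qed

section \<open>A normal form in groups satisfying the relations of the model\<close>

locale sd_relations = group Q for Q (structure) +
  fixes s :: 'a and a b :: "nat \<Rightarrow> 'a" and g :: nat
  assumes s_closed: "s \<in> carrier Q"
    and a_closed: "i \<in> {1..g} \<Longrightarrow> a i \<in> carrier Q"
    and b_closed: "i \<in> {1..g} \<Longrightarrow> b i \<in> carrier Q"
    and s_a: "i \<in> {1..g} \<Longrightarrow> s \<otimes> a i = a i \<otimes> s"
    and s_b: "i \<in> {1..g} \<Longrightarrow> s \<otimes> b i = b i \<otimes> s"
    and a_a: "i \<in> {1..g} \<Longrightarrow> j \<in> {1..g} \<Longrightarrow> a i \<otimes> a j = a j \<otimes> a i"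
    and b_b: "i \<in> {1..g} \<Longrightarrow> j \<in> {1..g} \<Longrightarrow> b i \<otimes> b j = b j \<otimes> b i"
    and a_b: "i \<in> {1..g} \<Longrightarrow> j \<in> {1..g} \<Longrightarrow> i \<noteq> j \<Longrightarrow> a i \<otimes> b j = b j \<otimes> a i"
    and a_b_twist: "i \<in> {1..g} \<Longrightarrow> a i \<otimes> b i = s [^] (2::int) \<otimes> b i \<otimes> a i"
begin

definition indices :: "nat list" where "indices = [1..<Suc g]"

lemma indices_set [simp]: "set indices = {1..g}" and indices_distinct [simp]: "distinct indices"
  by (auto simp: indices_def)

definition normal_form :: "int \<times> (nat \<Rightarrow> int) \<times> (nat \<Rightarrow> int) \<Rightarrow> 'a" where
  "normal_form u = (case u of (p, m, k) \<Rightarrow> s [^] p \<otimes> pow_prod a indices m \<otimes> pow_prod b indices k)"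

lemma A_closed: "pow_prod a indices m \<in> carrier Q"
  by (rule pow_prod_closed) (auto intro: a_closed)

lemma B_closed: "pow_prod b indices k \<in> carrier Q"
  by (rule pow_prod_closed) (auto intro: b_closed)

lemma normal_form_closed: "normal_form u \<in> carrier Q"
  using s_closed A_closed B_closed by (cases u) (simp add: normal_form_def)

lemma normal_form_one: "normal_form \<one>\<^bsub>sd_group g\<^esub> = \<one>"
  by (simp add: normal_form_def pow_prod_zero)

lemma s_pow_A: "s [^] (q::int) \<otimes> pow_prod a indices m = pow_prod a indices m \<otimes> s [^] q"
  by (rule pow_prod_commute[symmetric]) (use s_closed a_closed s_a commute_pow in auto)

lemma s_pow_A_assoc:
  "w \<in> carrier Q \<Longrightarrow> pow_prod a indices m \<otimes> (s [^] (q::int) \<otimes> w) = s [^] q \<otimes> (pow_prod a indices m \<otimes> w)"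
  using s_closed A_closed by (simp add: m_assoc[symmetric] s_pow_A)

lemma s_pow_B: "s [^] (q::int) \<otimes> pow_prod b indices k = pow_prod b indices k \<otimes> s [^] q"
  by (rule pow_prod_commute[symmetric]) (use s_closed b_closed s_b commute_pow in auto)

lemma normal_form_mult_s: "normal_form u \<otimes> s = normal_form (u \<otimes>\<^bsub>sd_group g\<^esub> sd_sigma)"
proof -
  obtain p m k where u: "u = (p, m, k)" by (cases u)
  have s1: "s = s [^] (1::int)" using s_closed by simp
  have "s [^] p \<otimes> pow_prod a indices m \<otimes> pow_prod b indices k \<otimes> s [^] (1::int) =
      s [^] p \<otimes> s [^] (1::int) \<otimes> pow_prod a indices m \<otimes> pow_prod b indices k"
    using s_closed A_closed B_closed
    by (simp add: m_assoc s_pow_A_assoc s_pow_B[symmetric] del: int_pow_1)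
  then show ?thesis
    using s_closed by (simp add: u normal_form_def sd_sigma_def int_pow_mult flip: s1)
qed

lemma normal_form_mult_b:
  assumes j: "j \<in> {1..g}"
  shows "normal_form u \<otimes> b j = normal_form (u \<otimes>\<^bsub>sd_group g\<^esub> sd_b j)"
proof -
  obtain p m k where u: "u = (p, m, k)" by (cases u)
  have "pow_prod b indices k \<otimes> b j = pow_prod b indices (k(j := k j + 1))"
    by (rule pow_prod_mult_factor) (use j b_closed b_b in auto)
  moreover have "u \<otimes>\<^bsub>sd_group g\<^esub> sd_b j = (p, m, k(j := k j + 1))"
    by (simp add: u sd_b_def fun_eq_iff)
  ultimately show ?thesis
    using s_closed A_closed B_closed b_closed[OF j] by (simp add: u normal_form_def m_assoc)
qed

text \<open>The only non-trivial case: moving \<open>a\<^sub>j\<close> across \<open>b\<^sub>j\<^sup>k\<^sup>\<^sub>j\<close> produces \<open>s\<^sup>-\<^sup>2\<^sup>k\<^sup>\<^sub>j\<close>.\<close>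

lemma normal_form_mult_a:
  assumes j: "j \<in> {1..g}"
  shows "normal_form u \<otimes> a j = normal_form (u \<otimes>\<^bsub>sd_group g\<^esub> sd_a j)"
proof -
  obtain p m k where u: "u = (p, m, k)" by (cases u)
  define z where "z = s [^] (-2::int)"
  have z: "z \<in> carrier Q" using s_closed by (simp add: z_def)
  have aj: "a j \<in> carrier Q" using a_closed[OF j] .
  have b_a: "b j \<otimes> a j = z \<otimes> a j \<otimes> b j"
  proof -
    have "z \<otimes> (a j \<otimes> b j) = (z \<otimes> s [^] (2::int)) \<otimes> b j \<otimes> a j"
      using z s_closed aj b_closed[OF j] by (simp add: a_b_twist[OF j] m_assoc)
    also have "z \<otimes> s [^] (2::int) = \<one>" using s_closed by (simp add: z_def int_pow_mult[symmetric])
    finally show ?thesis using z aj b_closed[OF j] by (simp add: m_assoc)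
  qed
  have "pow_prod b indices k \<otimes> a j = z [^] (if j \<in> set indices then k j else 0) \<otimes> a j \<otimes> pow_prod b indices k"
  proof (rule pow_prod_twist)
    show "b i \<otimes> z = z \<otimes> b i" if "i \<in> set indices" for i
      using commute_pow[OF s_closed b_closed, of i "-2"] s_b that unfolding z_def by auto
    show "b i \<otimes> a j = (if i = j then z else \<one>) \<otimes> a j \<otimes> b i" if "i \<in> set indices" for i
      using b_a a_b[OF j _, of i] that aj b_closed[of i] by (cases "i = j") auto
  qed (use b_closed aj z in auto)
  also have "z [^] (if j \<in> set indices then k j else 0) = s [^] (- 2 * k j)"
    using j s_closed by (simp add: z_def int_pow_pow)
  finally have B_a: "pow_prod b indices k \<otimes> a j = s [^] (- 2 * k j) \<otimes> a j \<otimes> pow_prod b indices k" .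
  have A_a: "pow_prod a indices m \<otimes> a j = pow_prod a indices (m(j := m j + 1))"
    by (rule pow_prod_mult_factor) (use j a_closed a_a in auto)
  have "normal_form u \<otimes> a j = s [^] p \<otimes> pow_prod a indices m \<otimes> (s [^] (- 2 * k j) \<otimes> a j \<otimes> pow_prod b indices k)"
    using s_closed A_closed B_closed aj by (simp add: u normal_form_def m_assoc B_a del: mult_minus_left)
  also have "\<dots> = s [^] p \<otimes> s [^] (- 2 * k j) \<otimes> (pow_prod a indices m \<otimes> a j) \<otimes> pow_prod b indices k"
    using s_closed A_closed B_closed aj by (simp add: m_assoc s_pow_A_assoc del: mult_minus_left)
  also have "\<dots> = normal_form (p - 2 * k j, m(j := m j + 1), k)"
    using s_closed by (simp add: A_a normal_form_def int_pow_mult[symmetric])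
  also have "(p - 2 * k j, m(j := m j + 1), k) = u \<otimes>\<^bsub>sd_group g\<^esub> sd_a j"
    using j by (simp add: u sd_a_def fun_eq_iff if_distrib[of "\<lambda>x. _ * x"] cong: if_cong)
  finally show ?thesis .
qed

end

section \<open>The quotient \<open>B\<^sub>n(\<Sigma>\<^sub>g)/\<Gamma>\<^sub>3\<close>\<close>

text \<open>From now on \<open>n \<ge> 3\<close>, so that \<open>\<sigma>\<^sub>2\<close> exists; \<open>Q\<close> is the quotient \<open>B\<^sub>n(\<Sigma>\<^sub>g)/\<Gamma>\<^sub>3\<close>
  and \<open>cls\<close> the canonical projection.\<close>

locale braid_quotient =
  fixes n g :: nat
  assumes n: "n \<ge> 3"
begin

abbreviation Bn :: "bgen word set monoid" where "Bn \<equiv> braid_group n g"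
abbreviation Q :: "bgen word set set monoid" where "Q \<equiv> Bn Mod lcs Bn 2"
abbreviation cls :: "bgen word set \<Rightarrow> bgen word set set" where "cls x \<equiv> lcs Bn 2 #>\<^bsub>Bn\<^esub> x"

sublocale Bn: group Bn by (rule braid_group_is_group)
sublocale cls: group_hom Bn Q cls by (rule Bn.lcs_quotient_hom)

definition qgen :: "bgen \<Rightarrow> bgen word set set" where
  "qgen x = cls (bclass n g x)"

definition q_letter :: "bgen \<Rightarrow> bool \<Rightarrow> bgen word set set" where
  "q_letter x e = (if e then inv\<^bsub>Q\<^esub> qgen x else qgen x)"

definition q_eval :: "bgen word \<Rightarrow> bgen word set set" where
  "q_eval w = foldr (\<lambda>(x, e) r. q_letter x e \<otimes>\<^bsub>Q\<^esub> r) w \<one>\<^bsub>Q\<^esub>"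

lemma q_eval_simps [simp]:
  "q_eval [] = \<one>\<^bsub>Q\<^esub>"
  "q_eval ((x, e) # w) = q_letter x e \<otimes>\<^bsub>Q\<^esub> q_eval w"
  by (simp_all add: q_eval_def)

lemma qgen_closed: "x \<in> bgens n g \<Longrightarrow> qgen x \<in> carrier Q"
  by (simp add: qgen_def bclass_closed)

lemma q_letter_closed: "x \<in> bgens n g \<Longrightarrow> q_letter x e \<in> carrier Q"
  by (simp add: q_letter_def qgen_closed)

lemma q_eval_closed: "fst ` set w \<subseteq> bgens n g \<Longrightarrow> q_eval w \<in> carrier Q"
  by (induction w) (auto simp: q_letter_closed simp del: mult_FactGroup one_FactGroup)

lemma q_eval_snoc:
  "fst ` set w \<subseteq> bgens n g \<Longrightarrow> x \<in> bgens n g \<Longrightarrow>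
   q_eval (w @ [(x, e)]) = q_eval w \<otimes>\<^bsub>Q\<^esub> q_letter x e"
  by (induction w)
     (auto simp: q_letter_closed q_eval_closed cls.H.m_assoc simp del: mult_FactGroup one_FactGroup)

lemma cls_word_class:
  "fst ` set w \<subseteq> bgens n g \<Longrightarrow> cls (word_class (braid_rels n g) w) = q_eval w"
proof (induction w)
  case Nil
  then show ?case using cls.hom_one by (simp add: braid_group_def presented_one del: one_FactGroup)
next
  case (Cons xe w)
  obtain x e where xe: "xe = (x, e)" by force
  have x: "x \<in> bgens n g" and w: "fst ` set w \<subseteq> bgens n g" using Cons.prems xe by auto
  have letter: "word_class (braid_rels n g) [(x, False)] = bclass n g x"
    "word_class (braid_rels n g) [(x, True)] = inv\<^bsub>Bn\<^esub> bclass n g x"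
    using x by (simp_all add: bclass_eq braid_group_def presented_inv)
  have "cls (word_class (braid_rels n g) (xe # w)) =
      cls (word_class (braid_rels n g) [(x, e)] \<otimes>\<^bsub>Bn\<^esub> word_class (braid_rels n g) w)"
    by (simp add: xe braid_group_def presented_mult)
  also have "\<dots> = q_letter x e \<otimes>\<^bsub>Q\<^esub> q_eval w"
    using Cons.IH[OF w] bclass_closed[OF x] braid_word_closed[OF w]
    by (cases e) (simp_all only: letter q_letter_def qgen_def cls.hom_mult cls.hom_inv
        Bn.inv_closed if_True if_False)
  finally show ?case by (simp add: xe)
qed

lemma q_eval_rel:
  assumes "(u, v) \<in> braid_rels n g" "fst ` set u \<subseteq> bgens n g" "fst ` set v \<subseteq> bgens n g"
  shows "q_eval u = q_eval v"
  using assms presented_rel[OF assms(1)] by (simp flip: cls_word_class)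

lemma commutators_central:
  "\<lbrakk>u \<in> carrier Q; v \<in> carrier Q; w \<in> carrier Q\<rbrakk> \<Longrightarrow>
   w \<otimes>\<^bsub>Q\<^esub> cls.H.commutator u v = cls.H.commutator u v \<otimes>\<^bsub>Q\<^esub> w"
  by (rule Bn.lcs2_quotient_commutators_central)

lemma bgens_simps:
  "Sig i \<in> bgens n g \<longleftrightarrow> 1 \<le> i \<and> i \<le> n - 1"
  "A l \<in> bgens n g \<longleftrightarrow> l \<in> {1..g}"
  "B l \<in> bgens n g \<longleftrightarrow> l \<in> {1..g}"
  by (auto simp: bgens_def)

text \<open>All \<open>\<sigma>\<^sub>i\<close> have the same image: consecutive ones satisfy the braid relation, and
  commutators are central in the quotient.\<close>

lemma qgen_Sig_step:
  assumes "1 \<le> i" "i \<le> n - 2"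
  shows "qgen (Sig i) = qgen (Sig (i + 1))"
proof -
  have x: "qgen (Sig i) \<in> carrier Q" and y: "qgen (Sig (i + 1)) \<in> carrier Q"
    using assms by (auto intro!: qgen_closed simp: bgens_simps)
  have rel: "(lt (Sig i) @ lt (Sig (i+1)) @ lt (Sig i), lt (Sig (i+1)) @ lt (Sig i) @ lt (Sig (i+1)))
      \<in> braid_rels n g"
    using assms unfolding braid_rels_def by auto
  have mem: "Sig i \<in> bgens n g" "Sig (i + 1) \<in> bgens n g"
    using assms by (auto simp: bgens_simps)
  have "qgen (Sig i) \<otimes>\<^bsub>Q\<^esub> qgen (Sig (i + 1)) \<otimes>\<^bsub>Q\<^esub> qgen (Sig i) =
      qgen (Sig (i + 1)) \<otimes>\<^bsub>Q\<^esub> qgen (Sig i) \<otimes>\<^bsub>Q\<^esub> qgen (Sig (i + 1))"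
    using q_eval_rel[OF rel] mem x y
    by (simp add: q_letter_def qgen_closed cls.H.m_assoc del: mult_FactGroup one_FactGroup)
  then show ?thesis
    using cls.H.braid_relation_imp_eq[OF commutators_central x y] by blast
qed

lemma qgen_Sig: "1 \<le> i \<Longrightarrow> i \<le> n - 1 \<Longrightarrow> qgen (Sig i) = qgen (Sig 1)"
proof (induction i)
  case (Suc k)
  then show ?case using qgen_Sig_step[of k] by (cases "k = 0") auto
qed simp

lemma sigma_commutes:
  assumes l: "l \<in> {1..g}" and c: "c \<in> {A l, B l}"
  shows "qgen (Sig 1) \<otimes>\<^bsub>Q\<^esub> qgen c = qgen c \<otimes>\<^bsub>Q\<^esub> qgen (Sig 1)"
proof -
  have rel: "(lt c @ lt (Sig 2), lt (Sig 2) @ lt c) \<in> braid_rels n g"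
    using l c n unfolding braid_rels_def by auto
  have mem: "c \<in> bgens n g" "Sig 2 \<in> bgens n g" using l c n by (auto simp: bgens_simps)
  have "qgen c \<otimes>\<^bsub>Q\<^esub> qgen (Sig 2) = qgen (Sig 2) \<otimes>\<^bsub>Q\<^esub> qgen c"
    using q_eval_rel[OF rel] mem by (simp add: q_letter_def qgen_closed del: mult_FactGroup one_FactGroup)
  moreover have "qgen (Sig 2) = qgen (Sig 1)" using n by (intro qgen_Sig) auto
  ultimately show ?thesis by simp
qed

lemma a_b_twist:
  assumes l: "l \<in> {1..g}"
  shows "qgen (A l) \<otimes>\<^bsub>Q\<^esub> qgen (B l) = qgen (Sig 1) [^]\<^bsub>Q\<^esub> (2::int) \<otimes>\<^bsub>Q\<^esub> qgen (B l) \<otimes>\<^bsub>Q\<^esub> qgen (A l)"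
proof (rule cls.H.genus_relation_twist)
  have rel: "(lt (A l) @ lt (Sig 1) @ lt (B l), lt (Sig 1) @ lt (B l) @ lt (Sig 1) @ lt (A l) @ lt (Sig 1))
      \<in> braid_rels n g"
    using l unfolding braid_rels_def by auto
  have mem: "A l \<in> bgens n g" "B l \<in> bgens n g" "Sig 1 \<in> bgens n g"
    using l n by (auto simp: bgens_simps)
  show "qgen (A l) \<otimes>\<^bsub>Q\<^esub> qgen (Sig 1) \<otimes>\<^bsub>Q\<^esub> qgen (B l) =
      qgen (Sig 1) \<otimes>\<^bsub>Q\<^esub> qgen (B l) \<otimes>\<^bsub>Q\<^esub> qgen (Sig 1) \<otimes>\<^bsub>Q\<^esub> qgen (A l) \<otimes>\<^bsub>Q\<^esub> qgen (Sig 1)"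
    using q_eval_rel[OF rel] mem
    by (simp add: q_letter_def qgen_closed cls.H.m_assoc del: mult_FactGroup one_FactGroup)
qed (use l n sigma_commutes in \<open>auto simp: bgens_simps intro!: qgen_closed\<close>)

lemma handles_commute:
  assumes "i \<in> {1..g}" "j \<in> {1..g}" "i \<noteq> j" "ci \<in> {A i, B i}" "cj \<in> {A j, B j}"
  shows "qgen ci \<otimes>\<^bsub>Q\<^esub> qgen cj = qgen cj \<otimes>\<^bsub>Q\<^esub> qgen ci"
proof -
  have ordered: "qgen ci \<otimes>\<^bsub>Q\<^esub> qgen cj = qgen cj \<otimes>\<^bsub>Q\<^esub> qgen ci"
    if "1 \<le> j" "j < i" "i \<le> g" "ci \<in> {A i, B i}" "cj \<in> {A j, B j}" for i j ci cj
  proof (rule cls.H.conjugate_commute_relation)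
    have ci: "ci \<in> bgens n g" and cj: "cj \<in> bgens n g" and s: "Sig 1 \<in> bgens n g"
      using that n by (auto simp: bgens_simps)
    then show "qgen ci \<in> carrier Q" "qgen cj \<in> carrier Q" "qgen (Sig 1) \<in> carrier Q"
      by (simp_all add: qgen_closed)
    show "qgen (Sig 1) \<otimes>\<^bsub>Q\<^esub> qgen cj = qgen cj \<otimes>\<^bsub>Q\<^esub> qgen (Sig 1)"
      using that by (intro sigma_commutes[of j]) auto
    have rel: "(lt ci @ lti (Sig 1) @ lt cj @ lt (Sig 1), lti (Sig 1) @ lt cj @ lt (Sig 1) @ lt ci)
        \<in> braid_rels n g"
      using that unfolding braid_rels_def by blast
    show "qgen ci \<otimes>\<^bsub>Q\<^esub> inv\<^bsub>Q\<^esub> qgen (Sig 1) \<otimes>\<^bsub>Q\<^esub> qgen cj \<otimes>\<^bsub>Q\<^esub> qgen (Sig 1) =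
        inv\<^bsub>Q\<^esub> qgen (Sig 1) \<otimes>\<^bsub>Q\<^esub> qgen cj \<otimes>\<^bsub>Q\<^esub> qgen (Sig 1) \<otimes>\<^bsub>Q\<^esub> qgen ci"
      using q_eval_rel[OF rel] ci cj s
      by (simp add: q_letter_def qgen_closed cls.H.m_assoc del: mult_FactGroup one_FactGroup)
  qed
  show ?thesis
    using assms ordered[of j i ci cj] ordered[of i j cj ci] by (cases "i < j") auto
qed

sublocale Qrel: sd_relations Q "qgen (Sig 1)" "\<lambda>l. qgen (A l)" "\<lambda>l. qgen (B l)" g
proof
  show "qgen (Sig 1) \<in> carrier Q" using n by (simp add: qgen_closed bgens_simps)
  show "qgen (A i) \<in> carrier Q" "qgen (B i) \<in> carrier Q" if "i \<in> {1..g}" for i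
    using that by (simp_all add: qgen_closed bgens_simps)
  show "qgen (Sig 1) \<otimes>\<^bsub>Q\<^esub> qgen (A i) = qgen (A i) \<otimes>\<^bsub>Q\<^esub> qgen (Sig 1)"
    "qgen (Sig 1) \<otimes>\<^bsub>Q\<^esub> qgen (B i) = qgen (B i) \<otimes>\<^bsub>Q\<^esub> qgen (Sig 1)" if "i \<in> {1..g}" for i
    by (rule sigma_commutes[OF that], simp)+
  show "qgen (A i) \<otimes>\<^bsub>Q\<^esub> qgen (A j) = qgen (A j) \<otimes>\<^bsub>Q\<^esub> qgen (A i)"
    "qgen (B i) \<otimes>\<^bsub>Q\<^esub> qgen (B j) = qgen (B j) \<otimes>\<^bsub>Q\<^esub> qgen (B i)"
    if "i \<in> {1..g}" "j \<in> {1..g}" for i j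
    using that handles_commute[of i j] by (cases "i = j"; auto)+
  show "qgen (A i) \<otimes>\<^bsub>Q\<^esub> qgen (B j) = qgen (B j) \<otimes>\<^bsub>Q\<^esub> qgen (A i)"
    if "i \<in> {1..g}" "j \<in> {1..g}" "i \<noteq> j" for i j
    using that handles_commute[of i j] by auto
  show "qgen (A i) \<otimes>\<^bsub>Q\<^esub> qgen (B i) = qgen (Sig 1) [^]\<^bsub>Q\<^esub> (2::int) \<otimes>\<^bsub>Q\<^esub> qgen (B i) \<otimes>\<^bsub>Q\<^esub> qgen (A i)"
    if "i \<in> {1..g}" for i
    using that by (rule a_b_twist)
qed

abbreviation normal_form :: "int \<times> (nat \<Rightarrow> int) \<times> (nat \<Rightarrow> int) \<Rightarrow> bgen word set set" where
  "normal_form \<equiv> Qrel.normal_form"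

lemma normal_form_mult_gen:
  assumes x: "x \<in> bgens n g"
  shows "normal_form u \<otimes>\<^bsub>Q\<^esub> qgen x = normal_form (u \<otimes>\<^bsub>sd_group g\<^esub> sd_gen g x)"
proof -
  from x consider (Sig) i where "x = Sig i" "1 \<le> i" "i \<le> n - 1"
    | (A) l where "x = A l" "l \<in> {1..g}" | (B) l where "x = B l" "l \<in> {1..g}"
    by (auto simp: bgens_def)
  then show ?thesis
  proof cases
    case Sig
    then have "qgen x = qgen (Sig 1)" "sd_gen g x = sd_sigma"
      using qgen_Sig[OF Sig(2,3)] by (simp_all add: sd_gen_simps)
    then show ?thesis by (simp only: Qrel.normal_form_mult_s)
  next
    case A
    then show ?thesis by (simp only: sd_gen_simps Qrel.normal_form_mult_a)
  next
    case B
    then show ?thesis by (simp only: sd_gen_simps Qrel.normal_form_mult_b)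
  qed
qed

lemma normal_form_mult_letter:
  assumes x: "x \<in> bgens n g" and u: "u \<in> carrier (sd_group g)"
  shows "normal_form u \<otimes>\<^bsub>Q\<^esub> q_letter x e = normal_form (u \<otimes>\<^bsub>sd_group g\<^esub> sd_letter g x e)"
proof (cases e)
  case True
  have "normal_form u \<otimes>\<^bsub>Q\<^esub> inv\<^bsub>Q\<^esub> qgen x = normal_form (u \<otimes>\<^bsub>sd_group g\<^esub> inv\<^bsub>sd_group g\<^esub> sd_gen g x)"
    by (rule right_mult_compatible_inv[where H = "sd_group g" and \<psi> = normal_form],
        (rule cls.H.is_group sd_group_is_group Qrel.normal_form_closed qgen_closed[OF x] sd_gen_closed
          normal_form_mult_gen[OF x] u)+)
  then show ?thesis using True by (simp add: q_letter_def sd_letter_def)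
next
  case False
  then show ?thesis using normal_form_mult_gen[OF x] by (simp add: q_letter_def sd_letter_def)
qed

lemma q_eval_normal_form: "fst ` set w \<subseteq> bgens n g \<Longrightarrow> q_eval w = normal_form (sd_eval g w)"
proof (induction w rule: rev_induct)
  case Nil
  then show ?case using Qrel.normal_form_one by simp
next
  case (snoc xe w)
  obtain x e where xe: "xe = (x, e)" by force
  have x: "x \<in> bgens n g" and w: "fst ` set w \<subseteq> bgens n g" using snoc.prems xe by auto
  have "q_eval (w @ [xe]) = normal_form (sd_eval g w) \<otimes>\<^bsub>Q\<^esub> q_letter x e"
    using snoc.IH[OF w] by (simp add: xe q_eval_snoc[OF w x] del: mult_FactGroup)
  also have "\<dots> = normal_form (sd_eval g w \<otimes>\<^bsub>sd_group g\<^esub> sd_letter g x e)"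
    by (rule normal_form_mult_letter[OF x sd_eval_closed])
  also have "sd_eval g w \<otimes>\<^bsub>sd_group g\<^esub> sd_letter g x e = sd_eval g (w @ [xe])"
    by (simp add: xe sd_eval_append monoid.r_one[OF group.is_monoid[OF sd_group_is_group]] del: sd_mult sd_one)
  finally show ?case .
qed

lemma kernel_subset_lcs2: "kernel Bn (sd_group g) (braid_to_sd n g) \<subseteq> lcs Bn 2"
proof
  fix x
  assume "x \<in> kernel Bn (sd_group g) (braid_to_sd n g)"
  then have x: "x \<in> carrier Bn" and hx: "braid_to_sd n g x = \<one>\<^bsub>sd_group g\<^esub>"
    by (auto simp: kernel_def simp del: sd_one)
  obtain w where w: "x = word_class (braid_rels n g) w" "fst ` set w \<subseteq> bgens n g"
    using x by (auto simp: braid_group_def elim: presented_carrierE)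
  have "cls x = normal_form (braid_to_sd n g x)"
    using w by (simp add: cls_word_class q_eval_normal_form braid_to_sd_class)
  also have "\<dots> = lcs Bn 2" by (simp only: hx Qrel.normal_form_one one_FactGroup)
  finally have "cls x = lcs Bn 2" .
  moreover have "x \<in> cls x"
    using Bn.rcos_self[OF x normal_imp_subgroup[OF Bn.lcs_normal]] .
  ultimately show "x \<in> lcs Bn 2" by (simp only:)
qed

end

lemma (in group_hom) FactGroup_iso_set_apply:
  assumes x: "x \<in> carrier G"
  shows "the_elem (h ` (kernel G H h #> x)) = h x"
proof (rule the_elem_image_unique)
  show "kernel G H h #> x \<noteq> {}"
    using G.rcos_self[OF x subgroup_kernel] by blast
  show "h y = h x" if "y \<in> kernel G H h #> x" for y
    using that x by (auto simp: r_coset_def kernel_def)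
qed

theorem mainTheorem3:
  fixes n g :: nat
  assumes "g \<ge> 1" and "n \<ge> 3"
  shows "let G = braid_group n g; N = Gamma G 3 in
           (\<forall>i j. 1 \<le> i \<and> i \<le> n - 1 \<and> 1 \<le> j \<and> j \<le> n - 1 \<longrightarrow>
               N #>\<^bsub>G\<^esub> bclass n g (Sig i) = N #>\<^bsub>G\<^esub> bclass n g (Sig j))
         \<and> (\<exists>\<phi>. \<phi> \<in> iso (G Mod N) (sd_group g)
               \<and> (\<forall>i. 1 \<le> i \<and> i \<le> n - 1 \<longrightarrow> \<phi> (N #>\<^bsub>G\<^esub> bclass n g (Sig i)) = sd_sigma)
               \<and> (\<forall>l. 1 \<le> l \<and> l \<le> g \<longrightarrow>
                     \<phi> (N #>\<^bsub>G\<^esub> bclass n g (A l)) = sd_a l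
                   \<and> \<phi> (N #>\<^bsub>G\<^esub> bclass n g (B l)) = sd_b l))"
proof -
  define \<phi> where "\<phi> C = the_elem (braid_to_sd n g ` C)" for C
  interpret braid_quotient n g using assms(2) by unfold_locales
  interpret h: group_hom Bn "sd_group g" "braid_to_sd n g"
    by (simp add: group_hom_def group_hom_axioms_def Bn.is_group sd_group_is_group braid_to_sd_hom)
  have Gamma3: "Gamma Bn 3 = lcs Bn 2" by (simp add: Gamma_def)
  have kernel: "kernel Bn (sd_group g) (braid_to_sd n g) = lcs Bn 2"
    using kernel_subset_lcs2 h.lcs2_subset_kernel[OF sd_commutator_central] by blast
  have iso: "\<phi> \<in> iso (Bn Mod lcs Bn 2) (sd_group g)"
    using h.FactGroup_iso_set[OF braid_to_sd_surj] assms(2) unfolding \<phi>_def kernel by simp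
  have \<phi>_gen: "\<phi> (qgen x) = sd_gen g x" if "x \<in> bgens n g" for x
    using h.FactGroup_iso_set_apply[OF bclass_closed[OF that]]
    by (simp add: \<phi>_def qgen_def kernel braid_to_sd_bclass)
  show ?thesis
    unfolding Let_def Gamma3 qgen_def[symmetric]
  proof (intro conjI allI impI exI[of _ \<phi>])
    fix i j
    assume "1 \<le> i \<and> i \<le> n - 1 \<and> 1 \<le> j \<and> j \<le> n - 1"
    then show "qgen (Sig i) = qgen (Sig j)" using qgen_Sig by metis
  next
    fix i
    assume "1 \<le> i \<and> i \<le> n - 1"
    then show "\<phi> (qgen (Sig i)) = sd_sigma"
      using \<phi>_gen[of "Sig i"] by (simp add: bgens_def sd_gen_simps)
  next
    fix l
    assume "1 \<le> l \<and> l \<le> g"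
    then show "\<phi> (qgen (A l)) = sd_a l" "\<phi> (qgen (B l)) = sd_b l"
      using \<phi>_gen[of "A l"] \<phi>_gen[of "B l"] by (simp_all add: bgens_def sd_gen_simps)
  qed (rule iso)
qed

end
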